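(* Let $d\ge2$ and let $\mathcal{H}\subset\mathbf{P}^{2^d-1}$ be the image of the Segre embedding of the product $\mathbf{P}^1\times\cdots\times\mathbf{P}^1$ of $d$ copies of the projective line over $\mathbf{F}_q$. Let $s$ be an integer with $0\le s<q$. Then the evaluation code $C_{\mathcal{H}}(s)$ has parameters $[(q+1)^d,(s+1)^d,(q-s+1)^d]$, and it is (up to permutation of coordinates) the $d$-fold tensor product $C_{\mathbf{P}^1}(s)\otimes\cdots\otimes C_{\mathbf{P}^1}(s)$ of the extended Reed--Solomon code $C_{\mathbf{P}^1}(s)$.
   Context: The Segre embedding sends $((u_1:v_1),\dots,(u_d:v_d))$ to the point of $\mathbf{P}^{2^d-1}$ whose coordinates, indexed by subsets $S\subseteq\{1,\dots,d\}$, are $\prod_{j\in S}u_j\prod_{j\notin S}v_j$. For a smooth projective variety $X\subset\mathbf{P}^r$ over $\mathbf{F}_q$ and $s\ge0$, $C_X(s)\subseteq\mathbf{F}_q^n$ is the image of the map sending a homogeneous polynomial $f\in\mathbf{F}_q[x_0,\dots,x_r]$ of degree $s$ to $(f(P_1),\dots,f(P_n))$, where $P_1,\dots,P_n$ are the $\mathbf{F}_q$-rational points of $X$ and $f(P)$ is evaluated at the representative of $P$ whose first nonzero coordinate from the left is $1$. $C_{\mathbf{P}^1}(s)$ (evaluation of binary forms of degree $s$ at $\mathbf{P}^1(\mathbf{F}_q)$) is the extended Reed--Solomon code with parameters $[q+1,s+1,q-s+1]$. Parameters $[n,k,d]$ denote length, dimension, minimum Hamming distance. *)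

theory Defs
  imports Complex_Main "HOL-Library.FuncSet" "HOL-Library.Function_Algebras"
begin

definition wscale :: "'a::field \<Rightarrow> ('i \<Rightarrow> 'a) \<Rightarrow> ('i \<Rightarrow> 'a)" where
  "wscale c w = (\<lambda>i. c * w i)"

text \<open>F_q-rational points of P^r, coordinates x_0,...,x_r (x i = 0 for i > r),
  each point given by its representative whose first nonzero coordinate from the left is 1.\<close>
definition proj_points :: "nat \<Rightarrow> (nat \<Rightarrow> 'a::field) set" where
  "proj_points r = {x. (\<forall>i>r. x i = 0) \<and>
      (\<exists>i\<le>r. x i = 1 \<and> (\<forall>j<i. x j = 0))}"

definition monomials :: "nat \<Rightarrow> nat \<Rightarrow> (nat \<Rightarrow> nat) set" where
  "monomials r s = {e. (\<forall>i>r. e i = 0) \<and> (\<Sum>i\<le>r. e i) = s}"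

text \<open>A homogeneous polynomial of degree s in x_0..x_r is given by its coefficient
  function on monomials; this is its value at a point x.\<close>
definition hom_eval :: "nat \<Rightarrow> nat \<Rightarrow> ((nat \<Rightarrow> nat) \<Rightarrow> 'a::field) \<Rightarrow> (nat \<Rightarrow> 'a) \<Rightarrow> 'a" where
  "hom_eval r s c x = (\<Sum>e\<in>monomials r s. c e * (\<Prod>i\<le>r. x i ^ e i))"

text \<open>Evaluation code C_X(s) of a set X of rational points of P^r; codewords are
  words indexed by the points of X (and 0 outside X).\<close>
definition eval_code :: "nat \<Rightarrow> (nat \<Rightarrow> 'a::field) set \<Rightarrow> nat \<Rightarrow> ((nat \<Rightarrow> 'a) \<Rightarrow> 'a) set" where
  "eval_code r X s = {(\<lambda>P. if P \<in> X then hom_eval r s c P else 0) | c. True}"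

definition code_dim :: "('i \<Rightarrow> 'a::field) set \<Rightarrow> nat" where
  "code_dim C = vector_space.dim wscale C"

definition weight :: "('i \<Rightarrow> 'a::zero) \<Rightarrow> nat" where
  "weight w = card {i. w i \<noteq> 0}"

definition min_dist :: "('i \<Rightarrow> 'a::zero) set \<Rightarrow> nat" where
  "min_dist C = Min {weight w | w. w \<in> C \<and> w \<noteq> 0}"

text \<open>Segre embedding of d copies of P^1 (factors indexed 0..d-1, factor j corresponding
  to factor j+1 of the paper, with (u_j : v_j) = (p j 0 : p j 1)).
  The coordinate with index k < 2^d corresponds to the subset
  S(k) = {j<d. binary digit of k at position d-1-j is 0}, so x_0 is the product of all u_j.\<close>
definition segre_subset :: "nat \<Rightarrow> nat \<Rightarrow> nat set" where
  "segre_subset d k = {j. j < d \<and> (k div 2 ^ (d - 1 - j)) mod 2 = 0}"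

definition segre :: "nat \<Rightarrow> (nat \<Rightarrow> nat \<Rightarrow> 'a::field) \<Rightarrow> (nat \<Rightarrow> 'a)" where
  "segre d p = (\<lambda>k. if k < 2 ^ d
      then (\<Prod>j<d. if j \<in> segre_subset d k then p j 0 else p j 1) else 0)"

definition P1_power :: "nat \<Rightarrow> (nat \<Rightarrow> nat \<Rightarrow> 'a::field) set" where
  "P1_power d = PiE {..<d} (\<lambda>_. proj_points 1)"

definition segre_points :: "nat \<Rightarrow> (nat \<Rightarrow> 'a::field) set" where
  "segre_points d = {x \<in> proj_points (2 ^ d - 1).
      \<exists>p\<in>P1_power d. \<exists>a. a \<noteq> 0 \<and> x = (\<lambda>k. a * segre d p k)}"

definition tensor_power :: "nat \<Rightarrow> 'i set \<Rightarrow> ('i \<Rightarrow> 'a::field) set \<Rightarrow> ((nat \<Rightarrow> 'i) \<Rightarrow> 'a) set" where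
  "tensor_power d I C = module.span wscale
     {(\<lambda>t. if t \<in> PiE {..<d} (\<lambda>_. I) then (\<Prod>j<d. c j (t j)) else 0) | c. \<forall>j<d. c j \<in> C}"

end

theory Submission
  imports Defs "HOL-Computational_Algebra.Polynomial"
begin

text \<open>
  The Segre map identifies the rational points of (P^1)^d with those of the Segre variety,
  and pulls back forms of degree s in the Segre coordinates to multihomogeneous forms of
  multidegree (s,...,s); every such multiform arises.  So, up to this permutation of
  coordinates, the Segre code is the code of multiforms evaluated on (P^1)^d, which is also
  the d-fold tensor power of the code C_P1(s) of binary forms.  Its parameters are computed
  directly: the monomials evaluate to a basis (a multiform vanishing on all rational points
  is zero when s <= q, by induction on d using the root bound for binary forms), and the
  minimum weight (q + 1 - s)^d follows by counting slices along the last factor and is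
  attained by a product of d extremal binary forms.
\<close>

interpretation words: vector_space "wscale :: 'a::field \<Rightarrow> ('i \<Rightarrow> 'a) \<Rightarrow> ('i \<Rightarrow> 'a)"
  by unfold_locales (auto simp: wscale_def fun_eq_iff algebra_simps)

lemma sum_fun_apply: "(\<Sum>m\<in>M. f m) x = (\<Sum>m\<in>M. f m x)"
  by (induction M rule: infinite_finite_induct) auto

lemma (in vector_space) independent_family:
  assumes fin: "finite M"
    and zero: "\<And>c. (\<Sum>m\<in>M. c m *s e m) = 0 \<Longrightarrow> \<forall>m\<in>M. c m = 0"
  shows "inj_on e M" and "independent (e ` M)"
proof -
  show inj: "inj_on e M"
  proof (rule inj_onI, rule ccontr)
    fix m1 m2 assume m: "m1 \<in> M" "m2 \<in> M" "e m1 = e m2" "m1 \<noteq> m2"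
    let ?c = "\<lambda>m. (if m = m1 then 1 else 0) - (if m = m2 then 1 else (0::'a))"
    have sum0: "(\<Sum>m\<in>M. ?c m *s e m) = 0"
      using m fin by (simp add: scale_left_diff_distrib sum_subtractf if_distrib[of "\<lambda>x. x *s _"] cong: if_cong)
    have "\<forall>m\<in>M. ?c m = 0" by (fact zero[OF sum0])
    then show False using m(1,4) by (auto dest: bspec[of _ _ m1])
  qed
  show "independent (e ` M)"
  proof (rule independent_if_scalars_zero)
    fix f x assume sum: "(\<Sum>x\<in>e ` M. f x *s x) = 0" and x: "x \<in> e ` M"
    have "(\<Sum>m\<in>M. (f \<circ> e) m *s e m) = 0" using sum by (simp add: sum.reindex[OF inj])
    then show "f x = 0" using zero[of "f \<circ> e"] x by auto
  qed (use fin in simp)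
qed

lemma dim_linear_image_span:
  fixes f :: "('i \<Rightarrow> 'a::field) \<Rightarrow> ('j \<Rightarrow> 'a)"
  assumes lin: "Vector_Spaces.linear wscale wscale f"
    and B: "words.independent B" "inj_on f (words.span B)"
  shows "words.dim (f ` words.span B) = card B"
proof -
  interpret f: Vector_Spaces.linear wscale wscale f by (fact lin)
  have "inj_on f B" using B(2) words.span_superset by (rule inj_on_subset)
  have "f ` words.span B = words.span (f ` B)" by (rule f.span_image[symmetric])
  then show ?thesis
    using words.dim_span_eq_card_independent[OF f.independent_injective_image[OF B]]
      card_image[OF \<open>inj_on f B\<close>] by simp
qed

definition words_on :: "'i set \<Rightarrow> ('i \<Rightarrow> 'a::zero) set" where
  "words_on X = {w. \<forall>i. i \<notin> X \<longrightarrow> w i = 0}"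

definition reindex_word :: "('j \<Rightarrow> 'i) \<Rightarrow> 'j set \<Rightarrow> ('i \<Rightarrow> 'a::zero) \<Rightarrow> ('j \<Rightarrow> 'a)" where
  "reindex_word \<sigma> Y w = (\<lambda>y. if y \<in> Y then w (\<sigma> y) else 0)"

lemma subspace_words_on: "words.subspace (words_on X :: ('i \<Rightarrow> 'a::field) set)"
  by (rule words.subspaceI) (auto simp: words_on_def wscale_def)

lemma weight_le_card: "finite X \<Longrightarrow> w \<in> words_on X \<Longrightarrow> weight w \<le> card X"
  unfolding weight_def words_on_def by (intro card_mono) auto

lemma min_dist_eqI:
  assumes X: "finite X" "C \<subseteq> words_on X"
    and lower: "\<And>w. w \<in> C \<Longrightarrow> w \<noteq> 0 \<Longrightarrow> n \<le> weight w"
    and w0: "w0 \<in> C" "w0 \<noteq> 0" "weight w0 \<le> n"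
  shows "min_dist C = n"
  unfolding min_dist_def
proof (rule Min_eqI)
  have "{weight w |w. w \<in> C \<and> w \<noteq> 0} \<subseteq> {..card X}"
    using weight_le_card[OF X(1)] X(2) by auto
  then show "finite {weight w |w. w \<in> C \<and> w \<noteq> 0}" by (rule finite_subset) simp
  show "n \<in> {weight w |w. w \<in> C \<and> w \<noteq> 0}"
    using w0 lower[OF w0(1,2)] by (intro CollectI exI[of _ w0]) simp
qed (use lower in auto)

lemma linear_reindex_word: "Vector_Spaces.linear wscale wscale (reindex_word \<sigma> Y :: ('i \<Rightarrow> 'a::field) \<Rightarrow> _)"
  unfolding Vector_Spaces.linear_iff
  by (auto simp: words.vector_space_axioms reindex_word_def wscale_def fun_eq_iff)

lemma inj_on_reindex_word:
  assumes "X \<subseteq> \<sigma> ` Y"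
  shows "inj_on (reindex_word \<sigma> Y) (words_on X)"
proof (rule inj_onI, rule ext)
  fix v w i assume v: "v \<in> words_on X" and w: "w \<in> words_on X"
    and eq: "reindex_word \<sigma> Y v = reindex_word \<sigma> Y w"
  show "v i = w i"
  proof (cases "i \<in> X")
    case True
    then obtain y where "y \<in> Y" "i = \<sigma> y" using assms by blast
    then show ?thesis using fun_cong[OF eq, of y] by (simp add: reindex_word_def)
  qed (use v w in \<open>simp add: words_on_def\<close>)
qed

lemma weight_reindex_word:
  assumes \<sigma>: "bij_betw \<sigma> Y X" and w: "w \<in> words_on X"
  shows "weight (reindex_word \<sigma> Y w) = weight w"
proof -
  have "{y. reindex_word \<sigma> Y w y \<noteq> 0} = {y \<in> Y. w (\<sigma> y) \<noteq> 0}"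
    by (auto simp: reindex_word_def)
  moreover have "bij_betw \<sigma> {y \<in> Y. w (\<sigma> y) \<noteq> 0} {i. w i \<noteq> 0}"
    using \<sigma> w unfolding bij_betw_def words_on_def by (auto intro: inj_on_subset)
  ultimately show ?thesis unfolding weight_def by (simp add: bij_betw_same_card)
qed

lemma min_dist_reindex_word:
  fixes \<sigma> :: "'j \<Rightarrow> 'i" and C :: "('i \<Rightarrow> 'a::zero) set"
  assumes \<sigma>: "bij_betw \<sigma> Y X" and C: "C \<subseteq> words_on X"
  shows "min_dist (reindex_word \<sigma> Y ` C) = min_dist C"
proof -
  have inj: "inj_on (reindex_word \<sigma> Y) (words_on X)"
    using \<sigma> by (intro inj_on_reindex_word) (simp add: bij_betw_def)
  have "0 \<in> words_on X" by (simp add: words_on_def)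
  moreover have "reindex_word \<sigma> Y 0 = (0 :: 'j \<Rightarrow> 'a)" by (simp add: reindex_word_def fun_eq_iff)
  ultimately have nz: "reindex_word \<sigma> Y w \<noteq> 0 \<longleftrightarrow> w \<noteq> 0" if "w \<in> C" for w
    using inj_onD[OF inj, of w 0] subsetD[OF C that] by auto
  have wt: "weight (reindex_word \<sigma> Y w) = weight w" if "w \<in> C" for w
    using weight_reindex_word[OF \<sigma> subsetD[OF C that]] .
  have "{weight v |v. v \<in> reindex_word \<sigma> Y ` C \<and> v \<noteq> 0} = {weight w |w. w \<in> C \<and> w \<noteq> 0}"
  proof (intro set_eqI iffI)
    fix n assume "n \<in> {weight v |v. v \<in> reindex_word \<sigma> Y ` C \<and> v \<noteq> 0}"
    then obtain w where "w \<in> C" "reindex_word \<sigma> Y w \<noteq> 0" "n = weight (reindex_word \<sigma> Y w)"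
      by blast
    then show "n \<in> {weight w |w. w \<in> C \<and> w \<noteq> 0}" using nz wt by auto
  next
    fix n assume "n \<in> {weight w |w. w \<in> C \<and> w \<noteq> 0}"
    then obtain w where "w \<in> C" "w \<noteq> 0" "n = weight w" by blast
    then show "n \<in> {weight v |v. v \<in> reindex_word \<sigma> Y ` C \<and> v \<noteq> 0}"
      using nz wt by (intro CollectI exI[of _ "reindex_word \<sigma> Y w"]) auto
  qed
  then show ?thesis by (simp add: min_dist_def)
qed

lemma code_dim_reindex_word:
  fixes B :: "('i \<Rightarrow> 'a::field) set"
  assumes \<sigma>: "bij_betw \<sigma> Y X" and B: "B \<subseteq> words_on X" "words.independent B"
  shows "code_dim (reindex_word \<sigma> Y ` words.span B) = card B"
  unfolding code_dim_def
proof (rule dim_linear_image_span[OF linear_reindex_word B(2)])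
  have "words.span B \<subseteq> words_on X"
    using B(1) subspace_words_on by (rule words.span_minimal)
  moreover have "inj_on (reindex_word \<sigma> Y) (words_on X)"
    using \<sigma> by (intro inj_on_reindex_word) (simp add: bij_betw_def)
  ultimately show "inj_on (reindex_word \<sigma> Y) (words.span B)" by (rule inj_on_subset[rotated])
qed

definition affine_pt :: "'a::field \<Rightarrow> nat \<Rightarrow> 'a" where
  "affine_pt a = (\<lambda>i. if i = 0 then 1 else if i = 1 then a else 0)"

definition infinity_pt :: "nat \<Rightarrow> 'a::field" where
  "infinity_pt = (\<lambda>i. if i = 1 then 1 else 0)"

lemma proj_points_1: "proj_points 1 = range affine_pt \<union> {infinity_pt}"
proof (intro set_eqI iffI)
  fix x :: "nat \<Rightarrow> 'a" assume "x \<in> proj_points 1"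
  then obtain i where x: "\<forall>k>1. x k = 0" "i \<le> 1" "x i = 1" "\<forall>j<i. x j = 0"
    by (auto simp: proj_points_def)
  have "x = affine_pt (x 1) \<or> x = infinity_pt"
  proof (cases "i = 0")
    case True
    then show ?thesis using x by (auto simp: affine_pt_def fun_eq_iff)
  next
    case False
    then have "i = 1" using x(2) by simp
    have "x = infinity_pt"
    proof
      fix k show "x k = infinity_pt k"
        using x \<open>i = 1\<close> x(1)[rule_format, of k]
        by (cases "k = 0"; cases "k = 1") (auto simp: infinity_pt_def)
    qed
    then show ?thesis ..
  qed
  then show "x \<in> range affine_pt \<union> {infinity_pt}" by auto
next
  fix x :: "nat \<Rightarrow> 'a" assume "x \<in> range affine_pt \<union> {infinity_pt}"
  then show "x \<in> proj_points 1"
    unfolding proj_points_def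
    by (auto simp: affine_pt_def infinity_pt_def intro: exI[of _ 0] exI[of _ 1])
qed

lemma inj_affine_pt: "inj affine_pt"
  by (auto simp: inj_def affine_pt_def fun_eq_iff dest: spec[of _ 1])

lemma infinity_pt_not_affine: "(infinity_pt :: nat \<Rightarrow> 'a::field) \<notin> range affine_pt"
proof
  assume "(infinity_pt :: nat \<Rightarrow> 'a) \<in> range affine_pt"
  then obtain a :: 'a where "infinity_pt = affine_pt a" by blast
  then have "infinity_pt 0 = affine_pt a 0" by simp
  then show False by (simp add: affine_pt_def infinity_pt_def)
qed

lemma affine_pt_in_proj_points: "affine_pt a \<in> proj_points 1"
  unfolding proj_points_1 by simp

lemma infinity_pt_in_proj_points: "infinity_pt \<in> proj_points 1"
  unfolding proj_points_1 by simp

lemma proj_points_1_cases: "p \<in> proj_points 1 \<Longrightarrow> p 0 = 1 \<or> (p 0 = 0 \<and> p 1 = 1)"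
  unfolding proj_points_1 by (auto simp: affine_pt_def infinity_pt_def)

lemma proj_points_1_eqI:
  "x \<in> proj_points 1 \<Longrightarrow> y \<in> proj_points 1 \<Longrightarrow> x 0 = y 0 \<Longrightarrow> x 1 = y 1 \<Longrightarrow> x = y"
  unfolding proj_points_1 by (auto simp: affine_pt_def infinity_pt_def fun_eq_iff)

lemma finite_proj_points_1: "finite (proj_points 1 :: (nat \<Rightarrow> 'a::{finite,field}) set)"
  unfolding proj_points_1 by simp

lemma card_proj_points_1:
  "card (proj_points 1 :: (nat \<Rightarrow> 'a::{finite,field}) set) = card (UNIV :: 'a set) + 1"
  unfolding proj_points_1 using infinity_pt_not_affine
  by (simp add: card_insert_if card_image[OF inj_affine_pt])

definition bmono :: "nat \<Rightarrow> nat \<Rightarrow> (nat \<Rightarrow> 'a::field) \<Rightarrow> 'a" where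
  "bmono s i p = p 0 ^ i * p 1 ^ (s - i)"

definition bform :: "nat \<Rightarrow> (nat \<Rightarrow> 'a::field) \<Rightarrow> (nat \<Rightarrow> 'a) \<Rightarrow> 'a" where
  "bform s b p = (\<Sum>i\<le>s. b i * bmono s i p)"

definition dehom :: "nat \<Rightarrow> (nat \<Rightarrow> 'a::field) \<Rightarrow> 'a poly" where
  "dehom s b = (\<Sum>k\<le>s. monom (b (s - k)) k)"

lemma coeff_dehom: "coeff (dehom s b) k = (if k \<le> s then b (s - k) else 0)"
  unfolding dehom_def coeff_sum coeff_monom
  by (auto simp: sum.delta' if_distrib cong: if_cong)

lemma bform_affine_pt: "bform s b (affine_pt x) = poly (dehom s b) x"
proof -
  have "bform s b (affine_pt x) = (\<Sum>i\<le>s. b i * x ^ (s - i))"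
    by (simp add: bform_def bmono_def affine_pt_def)
  also have "\<dots> = (\<Sum>k\<le>s. b (s - k) * x ^ k)"
    by (rule sum.reindex_bij_witness[of _ "\<lambda>k. s - k" "\<lambda>i. s - i"]) auto
  also have "\<dots> = poly (dehom s b) x"
    by (simp add: dehom_def poly_sum poly_monom)
  finally show ?thesis .
qed

lemma bform_infinity_pt: "bform s b infinity_pt = b 0"
proof -
  have "bform s b infinity_pt = (\<Sum>i\<le>s. if i = 0 then b i else 0)"
    unfolding bform_def by (rule sum.cong) (auto simp: bmono_def infinity_pt_def)
  then show ?thesis by simp
qed

text \<open>A nonzero binary form of degree s vanishes at no more than s points of the projective
  line (its dehomogenisation has degree at most s, and one less if it vanishes at infinity).\<close>

lemma bform_zeros_le:
  fixes b :: "nat \<Rightarrow> 'a::{finite,field}"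
  assumes "\<exists>i\<le>s. b i \<noteq> 0"
  shows "card {p \<in> proj_points 1. bform s b p = 0} \<le> s"
proof -
  obtain i where i: "i \<le> s" "b i \<noteq> 0" using assms by auto
  let ?g = "dehom s b"
  have "coeff ?g (s - i) \<noteq> 0" using i by (simp add: coeff_dehom)
  then have "?g \<noteq> 0" by auto
  have affine_roots: "card (affine_pt ` {x. poly ?g x = 0}) \<le> degree ?g"
    using card_poly_roots_bound[OF \<open>?g \<noteq> 0\<close>] card_image_le[of "{x. poly ?g x = 0}" affine_pt]
    by simp
  have zeros: "{p \<in> proj_points 1. bform s b p = 0}
      = affine_pt ` {x. poly ?g x = 0} \<union> (if b 0 = 0 then {infinity_pt} else {})"
    unfolding proj_points_1 by (auto simp: bform_affine_pt bform_infinity_pt)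
  show ?thesis
  proof (cases "b 0 = 0")
    case False
    have "degree ?g \<le> s" by (rule degree_le) (auto simp: coeff_dehom)
    then show ?thesis using zeros affine_roots False by simp
  next
    case True
    then have "s \<noteq> 0" using i by (cases "i = 0") auto
    have "degree ?g \<le> s - 1" using True by (intro degree_le) (auto simp: coeff_dehom)
    have "card {p \<in> proj_points 1. bform s b p = 0}
        \<le> card (affine_pt ` {x. poly ?g x = 0}) + card {infinity_pt :: nat \<Rightarrow> 'a}"
      unfolding zeros using True by (simp add: card_insert_if)
    then show ?thesis using affine_roots \<open>degree ?g \<le> s - 1\<close> \<open>s \<noteq> 0\<close> by simp
  qed
qed

lemma card_proj_points_1_partition:
  fixes f :: "(nat \<Rightarrow> 'a::{finite,field}) \<Rightarrow> 'b::zero"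
  shows "card (UNIV :: 'a set) + 1
    = card {p \<in> proj_points 1. f p \<noteq> 0} + card {p \<in> proj_points 1. f p = 0}"
  unfolding card_proj_points_1[symmetric]
  by (subst card_Un_disjoint[symmetric])
    (auto intro: finite_subset[OF _ finite_proj_points_1] arg_cong[where f = card])

lemma bform_nonzeros_ge:
  fixes b :: "nat \<Rightarrow> 'a::{finite,field}"
  assumes "\<exists>i\<le>s. b i \<noteq> 0"
  shows "card (UNIV :: 'a set) + 1 - s \<le> card {p \<in> proj_points 1. bform s b p \<noteq> 0}"
  using card_proj_points_1_partition[of "bform s b"] bform_zeros_le[OF assms] by simp

text \<open>For s < q this bound is attained: the form with s distinct affine roots is nonzero at
  infinity and at no more than q + 1 - s points.\<close>

lemma bform_minimal_weight:
  assumes s: "s < card (UNIV :: 'a::{finite,field} set)"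
  obtains b :: "nat \<Rightarrow> 'a::{finite,field}" where "bform s b infinity_pt \<noteq> 0"
    and "card {p \<in> proj_points 1. bform s b p \<noteq> 0} \<le> card (UNIV :: 'a set) + 1 - s"
proof -
  obtain h :: "nat \<Rightarrow> 'a" where h: "bij_betw h {0..<card (UNIV :: 'a set)} UNIV"
    using ex_bij_betw_nat_finite[of "UNIV :: 'a set"] by auto
  have inj_h: "inj_on h {..<s}"
    by (rule inj_on_subset[OF bij_betw_imp_inj_on[OF h]]) (use s in auto)
  define g where "g = (\<Prod>k<s. [:- h k, 1:])"
  define b where "b = (\<lambda>i. coeff g (s - i))"
  have deg_g: "degree g = s" unfolding g_def by (subst degree_prod_sum_eq) auto
  have "coeff g s = 1" using deg_g lead_coeff_prod[of "\<lambda>k. [:- h k, 1:]" "{..<s}"] by (simp add: g_def)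
  then have b0: "b 0 = 1" by (simp add: b_def)
  have "dehom s b = g"
    by (rule poly_eqI) (use deg_g coeff_eq_0[of g] in \<open>auto simp: coeff_dehom b_def\<close>)
  then have "affine_pt (h k) \<in> {p \<in> proj_points 1. bform s b p = 0}" if "k < s" for k
    using that affine_pt_in_proj_points by (auto simp: bform_affine_pt g_def poly_prod prod_zero_iff)
  then have "card (affine_pt ` h ` {..<s}) \<le> card {p \<in> proj_points 1. bform s b p = 0}"
    by (intro card_mono) (auto intro: finite_subset[OF _ finite_proj_points_1])
  moreover have "card (affine_pt ` h ` {..<s}) = s"
    using inj_h by (simp add: card_image inj_on_subset[OF inj_affine_pt])
  ultimately have "card {p \<in> proj_points 1. bform s b p \<noteq> 0} \<le> card (UNIV :: 'a set) + 1 - s"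
    using card_proj_points_1_partition[of "bform s b"] by simp
  then show ?thesis using that[of b] b0 by (simp add: bform_infinity_pt)
qed

lemma PiE_Suc_upd:
  "g \<in> PiE {..<d} A \<Longrightarrow> y \<in> A d \<Longrightarrow> g(d := y) \<in> PiE {..<Suc d} A"
  by (auto simp: PiE_def extensional_def Pi_def)

lemma PiE_Suc_restrict:
  "t \<in> PiE {..<Suc d} A \<Longrightarrow> t(d := undefined) \<in> PiE {..<d} A \<and> t d \<in> A d"
  by (auto simp: PiE_def extensional_def Pi_def)

lemma PiE_Suc_upd_inj:
  fixes d :: nat
  assumes "g \<in> PiE {..<d} A" "h \<in> PiE {..<d} B" "g(d := y) = h(d := z)"
  shows "g = h \<and> y = z"
proof
  have "g d = undefined" by (rule PiE_arb[OF assms(1)]) simp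
  moreover have "h d = undefined" by (rule PiE_arb[OF assms(2)]) simp
  ultimately have "g = (g(d := y))(d := undefined)" "h = (h(d := z))(d := undefined)"
    by (simp_all add: fun_upd_idem)
  then show "g = h" using assms(3) by simp
  show "y = z" using fun_cong[OF assms(3), of d] by simp
qed

lemma card_PiE_Suc_slices:
  assumes fin: "\<And>j. finite (A j)" and Y: "Y \<subseteq> A d"
    and slice: "\<And>p. p \<in> Y \<Longrightarrow> n \<le> card {t \<in> PiE {..<d} A. P (t(d := p))}"
  shows "card Y * n \<le> card {t \<in> PiE {..<Suc d} A. P t}"
proof -
  define N where "N p = {t \<in> PiE {..<d} A. P (t(d := p))}" for p
  have finY: "finite Y" using Y fin[of d] by (rule finite_subset)
  have finN: "finite (N p)" for p
    unfolding N_def using finite_PiE[of "{..<d}" A] fin by auto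
  have inj: "inj_on (\<lambda>(p, t). t(d := p)) (Sigma Y N)"
  proof (rule inj_onI, clarify)
    fix p t p' t' assume "t \<in> N p" "t' \<in> N p'" "t(d := p) = t'(d := p')"
    then show "p = p' \<and> t = t'" using PiE_Suc_upd_inj[of t d A t' A p p'] by (auto simp: N_def)
  qed
  have sub: "(\<lambda>(p, t). t(d := p)) ` Sigma Y N \<subseteq> {t \<in> PiE {..<Suc d} A. P t}"
  proof
    fix x assume "x \<in> (\<lambda>(p, t). t(d := p)) ` Sigma Y N"
    then obtain p t where "p \<in> Y" "t \<in> N p" "x = t(d := p)" by auto
    then show "x \<in> {t \<in> PiE {..<Suc d} A. P t}"
      using Y PiE_Suc_upd[of t d A p] by (auto simp: N_def)
  qed
  have "card Y * n = (\<Sum>p\<in>Y. n)" by simp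
  also have "\<dots> \<le> (\<Sum>p\<in>Y. card (N p))" by (rule sum_mono) (simp add: N_def slice)
  also have "\<dots> = card (Sigma Y N)" using finY finN by (simp add: card_SigmaI)
  also have "\<dots> = card ((\<lambda>(p, t). t(d := p)) ` Sigma Y N)" by (rule card_image[OF inj, symmetric])
  also have "\<dots> \<le> card {t \<in> PiE {..<Suc d} A. P t}"
    using sub by (rule card_mono[rotated]) (use finite_PiE[of "{..<Suc d}" A] fin in auto)
  finally show ?thesis .
qed

definition multidegrees :: "nat \<Rightarrow> nat \<Rightarrow> (nat \<Rightarrow> nat) set" where
  "multidegrees d s = PiE {..<d} (\<lambda>_. {..s})"

definition mmono :: "nat \<Rightarrow> nat \<Rightarrow> (nat \<Rightarrow> nat) \<Rightarrow> (nat \<Rightarrow> nat \<Rightarrow> 'a::field) \<Rightarrow> 'a" where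
  "mmono d s m t = (\<Prod>j<d. bmono s (m j) (t j))"

definition mform :: "nat \<Rightarrow> nat \<Rightarrow> ((nat \<Rightarrow> nat) \<Rightarrow> 'a::field) \<Rightarrow> (nat \<Rightarrow> nat \<Rightarrow> 'a) \<Rightarrow> 'a" where
  "mform d s a t = (\<Sum>m\<in>multidegrees d s. a m * mmono d s m t)"

lemma finite_multidegrees: "finite (multidegrees d s)"
  by (simp add: multidegrees_def finite_PiE)

lemma card_multidegrees: "card (multidegrees d s) = (s + 1) ^ d"
  by (simp add: multidegrees_def card_PiE)

lemma finite_P1_power: "finite (P1_power d :: (nat \<Rightarrow> nat \<Rightarrow> 'a::{finite,field}) set)"
  unfolding P1_power_def by (intro finite_PiE finite_proj_points_1) auto

lemma card_P1_power:
  "card (P1_power d :: (nat \<Rightarrow> nat \<Rightarrow> 'a::{finite,field}) set) = (card (UNIV :: 'a set) + 1) ^ d"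
  unfolding P1_power_def by (simp add: card_PiE card_proj_points_1[simplified])

lemma P1_power_0: "P1_power 0 = {\<lambda>_. undefined}"
  by (simp add: P1_power_def)

lemma mform_cong:
  "(\<And>m. m \<in> multidegrees d s \<Longrightarrow> a m = a' m) \<Longrightarrow> mform d s a t = mform d s a' t"
  unfolding mform_def by (rule sum.cong) simp_all

lemma mform_linear:
  "mform d s (\<lambda>m. \<Sum>i\<in>I. f i * g i m) t = (\<Sum>i\<in>I. f i * mform d s (g i) t)"
  unfolding mform_def
  by (simp add: sum_distrib_left sum_distrib_right sum.swap[of _ I] mult.assoc)

lemma mform_product:
  "mform d s (\<lambda>m. \<Prod>j<d. b j (m j)) t = (\<Prod>j<d. bform s (b j) (t j))"
  unfolding mform_def mmono_def bform_def multidegrees_def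
  by (subst prod_sum_PiE) (auto simp: prod.distrib)

lemma mform_Suc:
  "mform (Suc d) s a (t(d := p)) = (\<Sum>i\<le>s. bmono s i p * mform d s (\<lambda>m. a (m(d := i))) t)"
proof -
  have ms: "multidegrees (Suc d) s = (\<lambda>(y, g). g(d := y)) ` ({..s} \<times> multidegrees d s)"
    unfolding multidegrees_def lessThan_Suc by (rule PiE_insert_eq)
  have inj: "inj_on (\<lambda>(y, g). g(d := y)) ({..s} \<times> multidegrees d s)"
    unfolding multidegrees_def by (rule inj_combinator) simp
  have "mform (Suc d) s a (t(d := p)) =
      (\<Sum>(i, g)\<in>{..s} \<times> multidegrees d s. a (g(d := i)) * mmono (Suc d) s (g(d := i)) (t(d := p)))"
    unfolding mform_def ms by (subst sum.reindex[OF inj]) (simp add: case_prod_unfold)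
  also have "\<dots> = (\<Sum>(i, g)\<in>{..s} \<times> multidegrees d s. bmono s i p * (a (g(d := i)) * mmono d s g t))"
  proof (rule sum.cong[OF refl], clarify)
    fix i g
    have "(\<Prod>j<d. bmono s ((g(d := i)) j) ((t(d := p)) j)) = (\<Prod>j<d. bmono s (g j) (t j))"
      by (rule prod.cong) auto
    then show "a (g(d := i)) * mmono (Suc d) s (g(d := i)) (t(d := p)) =
        bmono s i p * (a (g(d := i)) * mmono d s g t)"
      by (simp add: mmono_def prod.lessThan_Suc)
  qed
  also have "\<dots> = (\<Sum>i\<le>s. bmono s i p * mform d s (\<lambda>m. a (m(d := i))) t)"
    by (simp add: sum.cartesian_product[symmetric] mform_def sum_distrib_left)
  finally show ?thesis .
qed

lemma mform_slice:
  "mform d s (\<lambda>m. \<Sum>i\<le>s. bmono s i p * a (m(d := i))) t = mform (Suc d) s a (t(d := p))"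
  unfolding mform_linear mform_Suc ..

lemma mform_slice_coeffs:
  "bform s (\<lambda>i. mform d s (\<lambda>m. a (m(d := i))) t) p = mform (Suc d) s a (t(d := p))"
  unfolding mform_Suc bform_def by (simp add: mult.commute)

text \<open>By induction on d: each coefficient of the expansion in the
  last factor is a binary form vanishing on all of P^1, hence zero by the root bound.\<close>

lemma mform_vanishing:
  fixes a :: "(nat \<Rightarrow> nat) \<Rightarrow> 'a::{finite,field}"
  assumes s: "s \<le> card (UNIV :: 'a set)"
    and zero: "\<forall>t\<in>P1_power d. mform d s a t = 0"
  shows "\<forall>m\<in>multidegrees d s. a m = 0"
  using zero
proof (induction d arbitrary: a)
  case 0
  then show ?case by (auto simp: mform_def multidegrees_def mmono_def P1_power_0)
next
  case (Suc d)
  have coeff_zero: "mform d s (\<lambda>m. a (m(d := i))) t = 0" if t: "t \<in> P1_power d" and i: "i \<le> s" for t i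
  proof (rule ccontr)
    let ?b = "\<lambda>i. mform d s (\<lambda>m. a (m(d := i))) t"
    assume "?b i \<noteq> 0"
    then have "card {p \<in> proj_points 1. bform s ?b p = 0} \<le> s"
      using i by (intro bform_zeros_le) auto
    moreover have "{p \<in> proj_points 1. bform s ?b p = 0} = proj_points 1"
      using Suc.prems t PiE_Suc_upd[of t d "\<lambda>_. proj_points 1"]
      by (auto simp: mform_slice_coeffs P1_power_def)
    ultimately show False using s card_proj_points_1[where 'a = 'a] by simp
  qed
  show ?case
  proof
    fix m assume m: "m \<in> multidegrees (Suc d) s"
    then have m': "m(d := undefined) \<in> multidegrees d s" "m d \<le> s"
      using PiE_Suc_restrict[of m d "\<lambda>_. {..s}"] by (auto simp: multidegrees_def)
    have "\<forall>m'\<in>multidegrees d s. a (m'(d := m d)) = 0"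
      using Suc.IH[of "\<lambda>m'. a (m'(d := m d))"] coeff_zero m'(2) by blast
    then show "a m = 0" using m'(1) by force
  qed
qed

text \<open>By induction on d, counting slices along the last factor:
  the binary form given by the slice coefficients is nonzero at at least q + 1 - s points of
  the last factor, and each such slice contributes at least (q + 1 - s)^(d-1) points.\<close>

lemma mform_weight:
  fixes a :: "(nat \<Rightarrow> nat) \<Rightarrow> 'a::{finite,field}"
  assumes "t0 \<in> P1_power d" "mform d s a t0 \<noteq> 0"
  shows "(card (UNIV :: 'a set) + 1 - s) ^ d \<le> card {t \<in> P1_power d. mform d s a t \<noteq> 0}"
  using assms
proof (induction d arbitrary: a t0)
  case 0
  then have "{t \<in> P1_power 0. mform 0 s a t \<noteq> 0} = {t0}" by (auto simp: P1_power_0)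
  then show ?case by simp
next
  case (Suc d)
  let ?n = "card (UNIV :: 'a set) + 1 - s"
  define t0' where "t0' = t0(d := undefined)"
  have t0': "t0' \<in> P1_power d" "t0 d \<in> proj_points 1"
    using PiE_Suc_restrict[of t0 d] Suc.prems(1) by (auto simp: t0'_def P1_power_def)
  define b where "b i = mform d s (\<lambda>m. a (m(d := i))) t0'" for i
  define Y where "Y = {p \<in> proj_points 1. bform s b p \<noteq> 0}"
  have "bform s b (t0 d) = mform (Suc d) s a (t0'(d := t0 d))"
    unfolding b_def by (rule mform_slice_coeffs)
  also have "\<dots> = mform (Suc d) s a t0" by (simp add: t0'_def)
  finally have "bform s b (t0 d) \<noteq> 0" using Suc.prems(2) by simp
  then have "\<exists>i\<le>s. b i \<noteq> 0" by (force simp: bform_def intro: ccontr)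
  then have "?n \<le> card Y" unfolding Y_def by (rule bform_nonzeros_ge)
  have slices: "?n ^ d \<le> card {t \<in> PiE {..<d} (\<lambda>_. proj_points 1). mform (Suc d) s a (t(d := p)) \<noteq> 0}"
    if "p \<in> Y" for p
  proof -
    have "mform d s (\<lambda>m. \<Sum>i\<le>s. bmono s i p * a (m(d := i))) t0' = bform s b p"
      unfolding mform_slice b_def by (rule mform_slice_coeffs[symmetric])
    then have "mform d s (\<lambda>m. \<Sum>i\<le>s. bmono s i p * a (m(d := i))) t0' \<noteq> 0"
      using that by (simp add: Y_def)
    from Suc.IH[OF t0'(1) this]
    have "?n ^ d
      \<le> card {t \<in> P1_power d. mform d s (\<lambda>m. \<Sum>i\<le>s. bmono s i p * a (m(d := i))) t \<noteq> 0}" .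
    then show ?thesis by (simp add: mform_slice P1_power_def)
  qed
  have "card Y * ?n ^ d \<le> card {t \<in> P1_power (Suc d). mform (Suc d) s a t \<noteq> 0}"
    unfolding P1_power_def
    by (rule card_PiE_Suc_slices[where A = "\<lambda>_. proj_points 1", OF finite_proj_points_1])
      (use slices in \<open>auto simp: Y_def\<close>)
  then show ?case using \<open>?n \<le> card Y\<close> by (simp add: le_trans[OF mult_right_mono])
qed

definition mform_word :: "nat \<Rightarrow> nat \<Rightarrow> ((nat \<Rightarrow> nat) \<Rightarrow> 'a::field) \<Rightarrow> (nat \<Rightarrow> nat \<Rightarrow> 'a) \<Rightarrow> 'a" where
  "mform_word d s a = (\<lambda>t. if t \<in> P1_power d then mform d s a t else 0)"

definition mform_code :: "nat \<Rightarrow> nat \<Rightarrow> ((nat \<Rightarrow> nat \<Rightarrow> 'a::field) \<Rightarrow> 'a) set" where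
  "mform_code d s = range (mform_word d s)"

definition mmono_word :: "nat \<Rightarrow> nat \<Rightarrow> (nat \<Rightarrow> nat) \<Rightarrow> (nat \<Rightarrow> nat \<Rightarrow> 'a::field) \<Rightarrow> 'a" where
  "mmono_word d s m = (\<lambda>t. if t \<in> P1_power d then mmono d s m t else 0)"

lemma mform_word_sum:
  "mform_word d s a = (\<Sum>m\<in>multidegrees d s. wscale (a m) (mmono_word d s m))"
  by (rule ext)
    (simp add: sum_fun_apply wscale_def mmono_word_def mform_word_def mform_def if_distrib cong: if_cong)

lemma mform_code_words_on: "mform_code d s \<subseteq> words_on (P1_power d)"
  by (auto simp: mform_code_def mform_word_def words_on_def)

lemma weight_mform_word: "weight (mform_word d s a) = card {t \<in> P1_power d. mform d s a t \<noteq> 0}"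
  unfolding weight_def mform_word_def by (rule arg_cong[where f = card]) auto

lemma mmono_words_independent:
  assumes "s \<le> card (UNIV :: 'a::{finite,field} set)"
  shows "inj_on (mmono_word d s :: _ \<Rightarrow> _ \<Rightarrow> 'a) (multidegrees d s)"
    and "words.independent (mmono_word d s ` multidegrees d s :: (_ \<Rightarrow> 'a) set)"
proof -
  have "\<forall>m\<in>multidegrees d s. c m = 0"
    if "(\<Sum>m\<in>multidegrees d s. wscale (c m) (mmono_word d s m)) = (0 :: _ \<Rightarrow> 'a)" for c
  proof (rule mform_vanishing[OF assms])
    show "\<forall>t\<in>P1_power d. mform d s c t = 0"
      using that unfolding mform_word_sum[symmetric] by (metis mform_word_def zero_fun_def)
  qed
  then show "inj_on (mmono_word d s :: _ \<Rightarrow> _ \<Rightarrow> 'a) (multidegrees d s)"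
    and "words.independent (mmono_word d s ` multidegrees d s :: (_ \<Rightarrow> 'a) set)"
    using words.independent_family[OF finite_multidegrees] by blast+
qed

lemma mform_code_span:
  assumes s: "s \<le> card (UNIV :: 'a::{finite,field} set)"
  shows "mform_code d s = words.span (mmono_word d s ` multidegrees d s :: (_ \<Rightarrow> 'a) set)"
proof (intro set_eqI iffI)
  fix w :: "_ \<Rightarrow> 'a" assume "w \<in> mform_code d s"
  then obtain a where w: "w = mform_word d s a" by (auto simp: mform_code_def)
  have "mform_word d s a \<in> words.span (mmono_word d s ` multidegrees d s)"
    unfolding mform_word_sum by (intro words.span_sum words.span_scale words.span_base imageI)
  then show "w \<in> words.span (mmono_word d s ` multidegrees d s)" by (simp add: w)
next
  fix w :: "_ \<Rightarrow> 'a" assume "w \<in> words.span (mmono_word d s ` multidegrees d s)"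
  then have "w \<in> range (\<lambda>u. \<Sum>v\<in>mmono_word d s ` multidegrees d s. wscale (u v) v)"
    by (simp add: words.span_finite[OF finite_imageI[OF finite_multidegrees]])
  then obtain u where "w = (\<Sum>v\<in>mmono_word d s ` multidegrees d s. wscale (u v) v)" by blast
  also have "\<dots> = mform_word d s (u \<circ> mmono_word d s)"
    unfolding mform_word_sum by (simp add: sum.reindex[OF mmono_words_independent(1)[OF s]])
  finally show "w \<in> mform_code d s" by (simp add: mform_code_def)
qed

lemma mform_code_minimal_word:
  assumes s: "s < card (UNIV :: 'a::{finite,field} set)"
  obtains w :: "(nat \<Rightarrow> nat \<Rightarrow> 'a::{finite,field}) \<Rightarrow> 'a"
  where "w \<in> mform_code d s" "w \<noteq> 0"
    "weight w \<le> (card (UNIV :: 'a set) + 1 - s) ^ d"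
proof -
  obtain b :: "nat \<Rightarrow> 'a" where b: "bform s b infinity_pt \<noteq> 0"
    "card {p \<in> proj_points 1. bform s b p \<noteq> 0} \<le> card (UNIV :: 'a set) + 1 - s"
    using bform_minimal_weight[OF s] by blast
  define a where "a = (\<lambda>m. \<Prod>j<d. b (m j))"
  have support: "{t \<in> P1_power d. mform d s a t \<noteq> 0}
      = PiE {..<d} (\<lambda>_. {p \<in> proj_points 1. bform s b p \<noteq> 0})"
    using mform_product[of d s "\<lambda>_. b"] by (auto simp: a_def P1_power_def PiE_def Pi_def)
  have "restrict (\<lambda>_. infinity_pt) {..<d} \<in> {t \<in> P1_power d. mform d s a t \<noteq> 0}"
    unfolding support using b(1) infinity_pt_in_proj_points by auto
  then have "mform_word d s a \<noteq> 0" by (auto simp: mform_word_def fun_eq_iff)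
  moreover have "weight (mform_word d s a) \<le> (card (UNIV :: 'a set) + 1 - s) ^ d"
    unfolding weight_mform_word support using power_mono[OF b(2), of d] by (simp add: card_PiE)
  ultimately show ?thesis using that[of "mform_word d s a"] by (simp add: mform_code_def)
qed

lemma min_dist_mform_code:
  assumes s: "s < card (UNIV :: 'a::{finite,field} set)"
  shows "min_dist (mform_code d s :: (_ \<Rightarrow> 'a) set) = (card (UNIV :: 'a set) + 1 - s) ^ d"
proof -
  obtain w0 :: "_ \<Rightarrow> 'a" where "w0 \<in> mform_code d s" "w0 \<noteq> 0"
    "weight w0 \<le> (card (UNIV :: 'a set) + 1 - s) ^ d"
    using mform_code_minimal_word[OF s] by blast
  moreover have "(card (UNIV :: 'a set) + 1 - s) ^ d \<le> weight w"
    if w_in: "w \<in> mform_code d s" and w_nz: "w \<noteq> 0" for w :: "_ \<Rightarrow> 'a"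
  proof -
    obtain a where w: "w = mform_word d s a" using w_in unfolding mform_code_def by blast
    then obtain t0 where "t0 \<in> P1_power d" "mform d s a t0 \<noteq> 0"
      using w_nz by (auto simp: mform_word_def fun_eq_iff split: if_splits)
    then show ?thesis unfolding w weight_mform_word by (rule mform_weight)
  qed
  ultimately show ?thesis
    by (intro min_dist_eqI[OF finite_P1_power mform_code_words_on]) auto
qed

definition bideg :: "nat \<Rightarrow> nat \<Rightarrow> nat \<Rightarrow> nat" where
  "bideg s i = (\<lambda>k. if k = 0 then i else if k = 1 then s - i else 0)"

lemma monomials_1: "monomials 1 s = bideg s ` {..s}"
proof (intro set_eqI iffI)
  fix e assume "e \<in> monomials 1 s"
  then have e: "\<forall>i>1. e i = 0" "e 0 + e 1 = s" by (auto simp: monomials_def)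
  have "e = bideg s (e 0)"
  proof
    fix k show "e k = bideg s (e 0) k" using e e(1)[rule_format, of k]
      by (cases "k = 0"; cases "k = 1") (auto simp: bideg_def)
  qed
  then show "e \<in> bideg s ` {..s}" using e by auto
next
  fix e assume "e \<in> bideg s ` {..s}"
  then show "e \<in> monomials 1 s" by (auto simp: monomials_def bideg_def)
qed

lemma inj_on_bideg: "inj_on (bideg s) {..s}"
  by (rule inj_onI) (auto simp: bideg_def fun_eq_iff dest: spec[of _ 0])

lemma hom_eval_1: "hom_eval 1 s c p = bform s (\<lambda>i. c (bideg s i)) p"
  unfolding hom_eval_def monomials_1 bform_def
  by (subst sum.reindex[OF inj_on_bideg]) (simp add: bmono_def bideg_def)

definition bform_word :: "nat \<Rightarrow> (nat \<Rightarrow> 'a::field) \<Rightarrow> (nat \<Rightarrow> 'a) \<Rightarrow> 'a" where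
  "bform_word s b = (\<lambda>p. if p \<in> proj_points 1 then bform s b p else 0)"

lemma eval_code_P1: "eval_code 1 (proj_points 1) s = range (bform_word s)"
proof (intro set_eqI iffI)
  fix w assume "w \<in> (eval_code 1 (proj_points 1) s :: ((nat \<Rightarrow> 'a) \<Rightarrow> 'a) set)"
  then obtain c where "w = (\<lambda>p. if p \<in> proj_points 1 then hom_eval 1 s c p else 0)"
    unfolding eval_code_def by blast
  then have "w = bform_word s (\<lambda>i. c (bideg s i))" unfolding hom_eval_1 bform_word_def .
  then show "w \<in> range (bform_word s)" by blast
next
  fix w assume "w \<in> range (bform_word s :: _ \<Rightarrow> _ \<Rightarrow> 'a)"
  then obtain b where b: "w = bform_word s b" by blast
  have "hom_eval 1 s (\<lambda>e. b (e 0)) = bform s b" unfolding hom_eval_1 by (simp add: bideg_def)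
  then show "w \<in> eval_code 1 (proj_points 1) s" unfolding eval_code_def b bform_word_def
    by (auto intro!: exI[of _ "\<lambda>e. b (e 0)"])
qed

definition tensor_word :: "nat \<Rightarrow> 'i set \<Rightarrow> (nat \<Rightarrow> 'i \<Rightarrow> 'a::field) \<Rightarrow> (nat \<Rightarrow> 'i) \<Rightarrow> 'a" where
  "tensor_word d I c = (\<lambda>t. if t \<in> PiE {..<d} (\<lambda>_. I) then (\<Prod>j<d. c j (t j)) else 0)"

lemma tensor_power_eq: "tensor_power d I C = words.span {tensor_word d I c | c. \<forall>j<d. c j \<in> C}"
  unfolding tensor_power_def tensor_word_def ..

lemma tensor_word_bform_words:
  "tensor_word d (proj_points 1) (\<lambda>j. bform_word s (b j)) = mform_word d s (\<lambda>m. \<Prod>j<d. b j (m j))"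
proof
  fix t show "tensor_word d (proj_points 1) (\<lambda>j. bform_word s (b j)) t
      = mform_word d s (\<lambda>m. \<Prod>j<d. b j (m j)) t"
  proof (cases "t \<in> P1_power d")
    case True
    then have "\<forall>j<d. t j \<in> proj_points 1" by (auto simp: P1_power_def)
    then show ?thesis using True unfolding tensor_word_def mform_word_def mform_product
      by (auto simp: P1_power_def bform_word_def intro!: prod.cong)
  qed (simp add: tensor_word_def mform_word_def P1_power_def)
qed

lemma bform_delta: "i \<le> s \<Longrightarrow> bform s (\<lambda>k. if k = i then 1 else 0) p = bmono s i p"
  unfolding bform_def by (simp add: if_distrib[of "\<lambda>x. x * _"] cong: if_cong)

lemma mmono_word_tensor_word:
  assumes m: "m \<in> multidegrees d s"
  shows "mmono_word d s m = tensor_word d (proj_points 1) (\<lambda>j. bform_word s (\<lambda>k. if k = m j then 1 else 0))"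
proof
  fix t show "mmono_word d s m t
      = tensor_word d (proj_points 1) (\<lambda>j. bform_word s (\<lambda>k. if k = m j then 1 else 0)) t"
  proof (cases "t \<in> P1_power d")
    case True
    then have "\<forall>j<d. t j \<in> proj_points 1 \<and> m j \<le> s" using m by (auto simp: P1_power_def multidegrees_def)
    then show ?thesis using True
      by (auto simp: mmono_word_def mmono_def tensor_word_def P1_power_def bform_word_def bform_delta
          intro!: prod.cong)
  qed (simp add: mmono_word_def tensor_word_def P1_power_def)
qed

text \<open>The d-fold tensor power of the extended Reed-Solomon code C_P1(s) is exactly the
  multiform code: the generators are multiform words, and they include the monomial basis.\<close>

lemma tensor_power_P1:
  assumes s: "s \<le> card (UNIV :: 'a::{finite,field} set)"
  shows "tensor_power d (proj_points 1) (eval_code 1 (proj_points 1 :: (nat \<Rightarrow> 'a) set) s)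
    = mform_code d s"
proof -
  let ?G = "{tensor_word d (proj_points 1) c | c.
    \<forall>j<d. c j \<in> eval_code 1 (proj_points 1 :: (nat \<Rightarrow> 'a) set) s}"
  have "?G \<subseteq> mform_code d s"
  proof
    fix w assume "w \<in> ?G"
    then obtain c where c: "\<forall>j<d. c j \<in> range (bform_word s)" "w = tensor_word d (proj_points 1) c"
      unfolding eval_code_P1 by blast
    then have "\<forall>j<d. \<exists>b. c j = bform_word s b" by blast
    then obtain b where "\<forall>j<d. c j = bform_word s (b j)" by metis
    then have "w = tensor_word d (proj_points 1) (\<lambda>j. bform_word s (b j))"
      unfolding c(2) tensor_word_def by (auto intro!: prod.cong)
    then have "w = mform_word d s (\<lambda>m. \<Prod>j<d. b j (m j))" by (simp only: tensor_word_bform_words)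
    then show "w \<in> mform_code d s" by (simp add: mform_code_def)
  qed
  then have "words.span ?G \<subseteq> mform_code d s"
    unfolding mform_code_span[OF s] by (intro words.span_minimal words.subspace_span)
  moreover have "mmono_word d s ` multidegrees d s \<subseteq> ?G"
    using mmono_word_tensor_word unfolding eval_code_P1 by blast
  then have "mform_code d s \<subseteq> words.span ?G"
    unfolding mform_code_span[OF s] by (rule words.span_mono)
  ultimately show ?thesis unfolding tensor_power_eq by blast
qed

lemma bit_div_mod: "((k::nat) div 2 ^ n) mod 2 = 0 \<longleftrightarrow> \<not> bit k n"
  by (simp add: bit_iff_odd even_iff_mod_2_eq_zero)

definition segre_index :: "nat \<Rightarrow> nat set \<Rightarrow> nat" where
  "segre_index d S = horner_sum of_bool 2 (map (\<lambda>n. d - 1 - n \<notin> S) [0..<d])"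

lemma bit_segre_index: "bit (segre_index d S) n \<longleftrightarrow> n < d \<and> d - 1 - n \<notin> S"
  by (auto simp: segre_index_def bit_horner_sum_bit_iff)

lemma segre_index_less: "segre_index d S < 2 ^ d"
proof -
  have "take_bit d (segre_index d S) = segre_index d S"
    by (rule bit_eqI) (auto simp: bit_take_bit_iff bit_segre_index)
  then show ?thesis by (metis take_bit_nat_less_exp)
qed

lemma segre_index_le: "segre_index d S \<le> 2 ^ d - 1"
  using segre_index_less[of d S] by simp

lemma segre_subset_segre_index: "S \<subseteq> {..<d} \<Longrightarrow> segre_subset d (segre_index d S) = S"
  unfolding segre_subset_def bit_div_mod bit_segre_index by auto

lemma not_in_segre_subset: "j < d \<Longrightarrow> j \<notin> segre_subset d k \<longleftrightarrow> bit k (d - 1 - j)"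
  unfolding segre_subset_def bit_div_mod by auto

lemma le_if_bits_le:
  assumes "(k::nat) < 2 ^ d" "k' < 2 ^ d" "\<And>n. n < d \<Longrightarrow> bit k' n \<Longrightarrow> bit k n"
  shows "k' \<le> k"
proof -
  have digits: "take_bit d x = (\<Sum>i<d. of_bool (bit x i) * 2 ^ i)" for x :: nat
    by (simp add: take_bit_sum push_bit_eq_mult atLeast0LessThan)
  have "(\<Sum>i<d. of_bool (bit k' i) * 2 ^ i) \<le> (\<Sum>i<d. of_bool (bit k i) * (2::nat) ^ i)"
    by (rule sum_mono) (use assms(3) in auto)
  then show ?thesis using assms(1,2) by (simp add: digits[symmetric] take_bit_nat_eq_self)
qed

text \<open>The Segre coordinate indexed
  by exactly this set of factors is the first nonzero coordinate of the Segre image, and it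
  equals 1; so the Segre image of p is already the normalised representative.\<close>

definition affine_factors :: "nat \<Rightarrow> (nat \<Rightarrow> nat \<Rightarrow> 'a::field) \<Rightarrow> nat set" where
  "affine_factors d p = {j. j < d \<and> p j 0 = 1}"

definition lead_index :: "nat \<Rightarrow> (nat \<Rightarrow> nat \<Rightarrow> 'a::field) \<Rightarrow> nat" where
  "lead_index d p = segre_index d (affine_factors d p)"

lemma P1_power_factor: "p \<in> P1_power d \<Longrightarrow> j < d \<Longrightarrow> p j \<in> proj_points 1"
  by (auto simp: P1_power_def)

lemma affine_factorsI:
  "p \<in> P1_power d \<Longrightarrow> j < d \<Longrightarrow> p j 0 \<noteq> 0 \<Longrightarrow> j \<in> affine_factors d p"
  using proj_points_1_cases[OF P1_power_factor] by (auto simp: affine_factors_def)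

lemma segre_subset_lead_index: "segre_subset d (lead_index d p) = affine_factors d p"
  unfolding lead_index_def by (rule segre_subset_segre_index) (auto simp: affine_factors_def)

lemma segre_lead_index:
  assumes p: "p \<in> P1_power d"
  shows "segre d p (lead_index d p) = 1"
proof -
  have "(\<Prod>j<d. if j \<in> affine_factors d p then p j 0 else p j 1) = (\<Prod>j<d. 1)"
  proof (rule prod.cong[OF refl])
    fix j assume "j \<in> {..<d}"
    then show "(if j \<in> affine_factors d p then p j 0 else p j 1) = 1"
      using proj_points_1_cases[OF P1_power_factor[OF p, of j]] by (auto simp: affine_factors_def)
  qed
  then show ?thesis
    using segre_subset_lead_index[of d p] by (simp add: segre_def lead_index_def segre_index_less)
qed

text \<open>Coordinates before the leading index vanish: a nonzero coordinate uses only affine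
  factors, so its index dominates the leading index digitwise.\<close>

lemma segre_below_lead_index:
  assumes p: "p \<in> P1_power d" and k: "k < lead_index d p"
  shows "segre d p k = 0"
proof (rule ccontr)
  assume nz: "segre d p k \<noteq> 0"
  have k_less: "k < 2 ^ d" using k segre_index_less[of d] by (simp add: lead_index_def less_trans)
  then have "(\<Prod>j<d. if j \<in> segre_subset d k then p j 0 else p j 1) \<noteq> 0"
    using nz by (simp add: segre_def)
  then have factor: "(if j \<in> segre_subset d k then p j 0 else p j 1) \<noteq> 0" if "j < d" for j
    using that by (simp add: prod_zero_iff)
  have "segre_subset d k \<subseteq> affine_factors d p"
  proof
    fix j assume j: "j \<in> segre_subset d k"
    then have "j < d" by (simp add: segre_subset_def)
    then show "j \<in> affine_factors d p" using factor[of j] j by (intro affine_factorsI[OF p]) auto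
  qed
  then have "lead_index d p \<le> k"
    unfolding lead_index_def
  proof (intro le_if_bits_le[OF k_less segre_index_less])
    fix n assume sub: "segre_subset d k \<subseteq> affine_factors d p"
      and n: "n < d" "bit (segre_index d (affine_factors d p)) n"
    then have "d - 1 - n \<notin> segre_subset d k" by (auto simp: bit_segre_index)
    then show "bit k n" using n(1) not_in_segre_subset[of "d - 1 - n" d k] by simp
  qed
  then show False using k by simp
qed

lemma segre_in_proj_points:
  assumes p: "p \<in> P1_power d"
  shows "segre d p \<in> proj_points (2 ^ d - 1)"
  unfolding proj_points_def
proof (intro CollectI conjI)
  show "\<forall>i>2 ^ d - 1. segre d p i = 0" by (auto simp: segre_def)
  have "lead_index d p \<le> 2 ^ d - 1" unfolding lead_index_def by (rule segre_index_le)
  then show "\<exists>i\<le>2 ^ d - 1. segre d p i = 1 \<and> (\<forall>j<i. segre d p j = 0)"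
    using segre_lead_index[OF p] segre_below_lead_index[OF p] by blast
qed

lemma proj_points_scale_eq:
  assumes x: "x \<in> proj_points r" and y: "y \<in> proj_points r" and a: "a \<noteq> 0"
    and xy: "x = (\<lambda>k. a * y k)"
  shows "a = 1"
proof -
  obtain i where i: "y i = 1" "\<forall>j<i. y j = 0" using y by (auto simp: proj_points_def)
  obtain i' where i': "x i' = 1" "\<forall>j<i'. x j = 0" using x by (auto simp: proj_points_def)
  have "\<not> i' < i" using i'(1) i(2) xy by auto
  moreover have "\<not> i < i'" using i'(2) i(1) xy a by force
  ultimately show "a = 1" using i i' xy by (metis mult.right_neutral nat_neq_iff)
qed

lemma segre_points_eq: "segre_points d = segre d ` P1_power d"
proof (intro set_eqI iffI)
  fix x :: "nat \<Rightarrow> 'a" assume "x \<in> segre_points d"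
  then obtain p a where p: "x \<in> proj_points (2 ^ d - 1)" "p \<in> P1_power d" "a \<noteq> 0"
      "x = (\<lambda>k. a * segre d p k)"
    by (auto simp: segre_points_def)
  then have "a = 1" using proj_points_scale_eq[OF p(1) segre_in_proj_points[OF p(2)] p(3,4)] by simp
  then show "x \<in> segre d ` P1_power d" using p by auto
next
  fix x :: "nat \<Rightarrow> 'a" assume "x \<in> segre d ` P1_power d"
  then obtain p where p: "p \<in> P1_power d" "x = segre d p" by auto
  then show "x \<in> segre_points d" unfolding segre_points_def
    using segre_in_proj_points[OF p(1)] by (auto intro!: bexI[of _ p] exI[of _ 1])
qed

lemma segre_drop_affine_factor:
  assumes p: "p \<in> P1_power d" and j: "j \<in> affine_factors d p"
  shows "segre d p (segre_index d (affine_factors d p - {j})) = p j 1"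
proof -
  have "j < d" using j by (simp add: affine_factors_def)
  have S: "segre_subset d (segre_index d (affine_factors d p - {j})) = affine_factors d p - {j}"
    by (rule segre_subset_segre_index) (auto simp: affine_factors_def)
  have "(\<Prod>i<d. if i \<in> affine_factors d p - {j} then p i 0 else p i 1) = (\<Prod>i<d. if i = j then p j 1 else 1)"
  proof (rule prod.cong[OF refl])
    fix i assume "i \<in> {..<d}"
    then show "(if i \<in> affine_factors d p - {j} then p i 0 else p i 1) = (if i = j then p j 1 else 1)"
      using proj_points_1_cases[OF P1_power_factor[OF p, of i]] by (auto simp: affine_factors_def)
  qed
  also have "\<dots> = p j 1" using \<open>j < d\<close> by (simp add: prod.delta)
  finally show ?thesis by (simp add: segre_def segre_index_less S)
qed

lemma P1_power_eqI:
  assumes p: "p \<in> P1_power d" and p': "p' \<in> P1_power d"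
    and A: "affine_factors d p = affine_factors d p'"
    and slope: "\<And>j. j \<in> affine_factors d p \<Longrightarrow> p j 1 = p' j 1"
  shows "p = p'"
proof
  fix j show "p j = p' j"
  proof (cases "j < d")
    case False
    then have "j \<notin> {..<d}" by simp
    then show ?thesis
      using PiE_arb[OF p[unfolded P1_power_def]] PiE_arb[OF p'[unfolded P1_power_def]] by metis
  next
    case True
    note pj = P1_power_factor[OF p True] and p'j = P1_power_factor[OF p' True]
    show ?thesis
    proof (cases "j \<in> affine_factors d p")
      case True
      then have "j \<in> affine_factors d p'" using A by simp
      then show ?thesis using True slope[OF True]
        by (intro proj_points_1_eqI[OF pj p'j]) (simp_all add: affine_factors_def)
    next
      case False
      then have "j \<notin> affine_factors d p'" using A by simp
      then have "p j 0 = 0 \<and> p j 1 = 1" "p' j 0 = 0 \<and> p' j 1 = 1"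
        using False \<open>j < d\<close> proj_points_1_cases[OF pj] proj_points_1_cases[OF p'j]
        by (auto simp: affine_factors_def)
      then show ?thesis by (intro proj_points_1_eqI[OF pj p'j]) simp_all
    qed
  qed
qed

lemma inj_on_segre: "inj_on (segre d) (P1_power d :: (nat \<Rightarrow> nat \<Rightarrow> 'a::field) set)"
proof (rule inj_onI)
  fix p p' :: "nat \<Rightarrow> nat \<Rightarrow> 'a"
  assume p: "p \<in> P1_power d" and p': "p' \<in> P1_power d" and eq: "segre d p = segre d p'"
  have lead: "lead_index d p = lead_index d p'"
  proof (rule ccontr)
    assume "lead_index d p \<noteq> lead_index d p'"
    then consider "lead_index d p < lead_index d p'" | "lead_index d p' < lead_index d p" by linarith
    then show False
    proof cases
      case 1
      then have "segre d p' (lead_index d p) = 0" by (rule segre_below_lead_index[OF p'])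
      then show False using segre_lead_index[OF p] eq by simp
    next
      case 2
      then have "segre d p (lead_index d p') = 0" by (rule segre_below_lead_index[OF p])
      then show False using segre_lead_index[OF p'] eq by simp
    qed
  qed
  have "affine_factors d p = segre_subset d (lead_index d p)"
    by (rule segre_subset_lead_index[symmetric])
  also have "\<dots> = affine_factors d p'" unfolding lead by (rule segre_subset_lead_index)
  finally have A: "affine_factors d p = affine_factors d p'" .
  show "p = p'"
  proof (rule P1_power_eqI[OF p p' A])
    fix j assume j: "j \<in> affine_factors d p"
    have "p j 1 = segre d p (segre_index d (affine_factors d p - {j}))"
      by (rule segre_drop_affine_factor[OF p j, symmetric])
    also have "\<dots> = p' j 1"
      unfolding eq A using j A by (intro segre_drop_affine_factor[OF p']) simp
    finally show "p j 1 = p' j 1" .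
  qed
qed

definition segre_inv :: "nat \<Rightarrow> (nat \<Rightarrow> 'a::field) \<Rightarrow> (nat \<Rightarrow> nat \<Rightarrow> 'a)" where
  "segre_inv d = the_inv_into (P1_power d) (segre d)"

lemma bij_segre_inv: "bij_betw (segre_inv d) (segre_points d) (P1_power d)"
  unfolding segre_inv_def segre_points_eq by (rule bij_betw_the_inv_into) (simp add: bij_betw_def inj_on_segre)

lemma segre_segre_inv: "x \<in> segre_points d \<Longrightarrow> segre d (segre_inv d x) = x"
  unfolding segre_inv_def segre_points_eq by (rule f_the_inv_into_f[OF inj_on_segre])

text \<open>Pullback of monomials along the Segre map: the monomial with exponent vector e becomes
  the multiform monomial whose j-th degree is the total exponent of the coordinates
  containing u_j.\<close>

definition multidegree :: "nat \<Rightarrow> (nat \<Rightarrow> nat) \<Rightarrow> nat \<Rightarrow> nat" where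
  "multidegree d e = (\<lambda>j. if j < d then (\<Sum>k\<in>{..2 ^ d - 1} \<inter> {k. j \<in> segre_subset d k}. e k) else undefined)"

lemma monomial_le_degree: "e \<in> monomials r s \<Longrightarrow> e i \<le> s"
  by (cases "i \<le> r") (auto simp: monomials_def intro: member_le_sum[of i "{..r}" e, THEN order_trans])

lemma finite_monomials: "finite (monomials r s)"
proof (rule finite_subset)
  show "monomials r s \<subseteq> (\<lambda>f i. if i \<le> r then f i else 0) ` PiE {..r} (\<lambda>_. {..s})"
  proof
    fix e assume e: "e \<in> monomials r s"
    have "e = (\<lambda>i. if i \<le> r then restrict e {..r} i else 0)"
      using e by (auto simp: monomials_def fun_eq_iff)
    moreover have "restrict e {..r} \<in> PiE {..r} (\<lambda>_. {..s})" using monomial_le_degree[OF e] by auto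
    ultimately show "e \<in> (\<lambda>f i. if i \<le> r then f i else 0) ` PiE {..r} (\<lambda>_. {..s})" by blast
  qed
qed (simp add: finite_PiE)

lemma multidegree_in_multidegrees:
  assumes e: "e \<in> monomials (2 ^ d - 1) s"
  shows "multidegree d e \<in> multidegrees d s"
proof -
  have "multidegree d e j \<le> s" if "j < d" for j
  proof -
    have "multidegree d e j \<le> (\<Sum>k\<le>2 ^ d - 1. e k)"
      using that unfolding multidegree_def by (simp add: sum_mono2)
    then show ?thesis using e by (simp add: monomials_def)
  qed
  then show ?thesis unfolding multidegrees_def by (intro PiE_I) (auto simp: multidegree_def)
qed

lemma monomial_segre:
  fixes t :: "nat \<Rightarrow> nat \<Rightarrow> 'a::field"
  assumes e: "e \<in> monomials (2 ^ d - 1) s"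
  shows "(\<Prod>k\<le>2 ^ d - 1. segre d t k ^ e k) = mmono d s (multidegree d e) t"
proof -
  let ?r = "2 ^ d - 1 :: nat"
  let ?coord = "\<lambda>j k. if j \<in> segre_subset d k then t j 0 else t j 1"
  have "(\<Prod>k\<le>?r. segre d t k ^ e k) = (\<Prod>k\<le>?r. \<Prod>j<d. ?coord j k ^ e k)"
  proof (rule prod.cong[OF refl])
    fix k assume "k \<in> {..?r}"
    moreover have "(0::nat) < 2 ^ d" by simp
    ultimately have "k < 2 ^ d" by (simp, linarith)
    then show "segre d t k ^ e k = (\<Prod>j<d. ?coord j k ^ e k)"
      by (simp add: segre_def prod_power_distrib)
  qed
  also have "\<dots> = (\<Prod>j<d. \<Prod>k\<le>?r. ?coord j k ^ e k)" by (rule prod.swap)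
  also have "\<dots> = (\<Prod>j<d. bmono s (multidegree d e j) (t j))"
  proof (rule prod.cong[OF refl])
    fix j assume j: "j \<in> {..<d}"
    let ?A = "{..?r} \<inter> {k. j \<in> segre_subset d k}"
    let ?B = "{..?r} \<inter> - {k. j \<in> segre_subset d k}"
    have "sum e ?A + sum e ?B = s"
      using e sum.If_cases[of "{..?r}" "\<lambda>k. j \<in> segre_subset d k" e e] by (simp add: monomials_def)
    then have B: "sum e ?B = s - sum e ?A" by simp
    have A: "multidegree d e j = sum e ?A" using j by (simp add: multidegree_def)
    have "(\<Prod>k\<le>?r. ?coord j k ^ e k) = (\<Prod>k\<in>?A. t j 0 ^ e k) * (\<Prod>k\<in>?B. t j 1 ^ e k)"
      by (simp add: if_distrib[of "\<lambda>x. x ^ _"] prod.If_cases)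
    also have "\<dots> = t j 0 ^ sum e ?A * t j 1 ^ sum e ?B" by (simp add: power_sum)
    finally show "(\<Prod>k\<le>?r. ?coord j k ^ e k) = bmono s (multidegree d e j) (t j)"
      unfolding bmono_def A B .
  qed
  finally show ?thesis by (simp add: mmono_def)
qed

definition pullback_coeffs :: "nat \<Rightarrow> nat \<Rightarrow> ((nat \<Rightarrow> nat) \<Rightarrow> 'a::field) \<Rightarrow> (nat \<Rightarrow> nat) \<Rightarrow> 'a" where
  "pullback_coeffs d s c m = (\<Sum>e\<in>{e \<in> monomials (2 ^ d - 1) s. multidegree d e = m}. c e)"

lemma hom_eval_segre:
  fixes t :: "nat \<Rightarrow> nat \<Rightarrow> 'a::field"
  shows "hom_eval (2 ^ d - 1) s c (segre d t) = mform d s (pullback_coeffs d s c) t"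
proof -
  have "hom_eval (2 ^ d - 1) s c (segre d t)
      = (\<Sum>e\<in>monomials (2 ^ d - 1) s. c e * mmono d s (multidegree d e) t)"
    unfolding hom_eval_def
  proof (rule sum.cong[OF refl])
    fix e assume "e \<in> monomials (2 ^ d - 1) s"
    then show "c e * (\<Prod>k\<le>2 ^ d - 1. segre d t k ^ e k) = c e * mmono d s (multidegree d e) t"
      by (simp only: monomial_segre)
  qed
  also have "\<dots> = (\<Sum>m\<in>multidegrees d s.
      \<Sum>e\<in>{e \<in> monomials (2 ^ d - 1) s. multidegree d e = m}. c e * mmono d s (multidegree d e) t)"
    by (rule sum.group[symmetric])
      (auto simp: finite_monomials finite_multidegrees multidegree_in_multidegrees)
  also have "\<dots> = mform d s (pullback_coeffs d s c) t"
    unfolding mform_def pullback_coeffs_def sum_distrib_right by (intro sum.cong) auto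
  finally show ?thesis .
qed

text \<open>Conversely every multidegree m is the multidegree of some monomial of degree s: take the
  s coordinates indexed by the sets {j. i < m j} for i < s.\<close>

definition segre_monomial :: "nat \<Rightarrow> nat \<Rightarrow> (nat \<Rightarrow> nat) \<Rightarrow> nat \<Rightarrow> nat" where
  "segre_monomial d s m = (\<lambda>k. \<Sum>i<s. if k = segre_index d {j. j < d \<and> i < m j} then 1 else 0)"

lemma segre_monomial_in_monomials: "segre_monomial d s m \<in> monomials (2 ^ d - 1) s"
proof -
  have "\<forall>k>2 ^ d - 1. segre_monomial d s m k = 0"
    using segre_index_le[of d] by (auto simp: segre_monomial_def intro!: sum.neutral) (metis not_le)
  moreover have "(\<Sum>k\<le>2 ^ d - 1. segre_monomial d s m k) = s"
  proof -
    have "(\<Sum>k\<le>2 ^ d - 1. segre_monomial d s m k)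
        = (\<Sum>i<s. \<Sum>k\<le>2 ^ d - 1. if k = segre_index d {j. j < d \<and> i < m j} then 1 else 0)"
      unfolding segre_monomial_def by (rule sum.swap)
    also have "\<dots> = (\<Sum>i<s. 1)" by (rule sum.cong[OF refl]) (use segre_index_le in simp)
    finally show ?thesis by simp
  qed
  ultimately show ?thesis by (simp add: monomials_def)
qed

lemma multidegree_segre_monomial:
  assumes m: "m \<in> multidegrees d s"
  shows "multidegree d (segre_monomial d s m) = m"
proof
  fix j show "multidegree d (segre_monomial d s m) j = m j"
  proof (cases "j < d")
    case False
    then show ?thesis using m by (auto simp: multidegree_def multidegrees_def PiE_def extensional_def)
  next
    case True
    have mj: "m j \<le> s" using m True by (auto simp: multidegrees_def)
    let ?A = "{..2 ^ d - 1} \<inter> {k. j \<in> segre_subset d k}"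
    let ?k = "\<lambda>i. segre_index d {j. j < d \<and> i < m j}"
    have mem: "?k i \<in> ?A \<longleftrightarrow> i < m j" for i
      using True segre_index_le[of d "{j. j < d \<and> i < m j}"]
      by (simp add: segre_subset_segre_index subset_eq)
    have "multidegree d (segre_monomial d s m) j = (\<Sum>k\<in>?A. \<Sum>i<s. if k = ?k i then 1 else 0)"
      using True by (simp add: multidegree_def segre_monomial_def)
    also have "\<dots> = (\<Sum>i<s. \<Sum>k\<in>?A. if k = ?k i then 1 else 0)" by (rule sum.swap)
    also have "\<dots> = (\<Sum>i<s. if i < m j then 1 else 0)"
    proof (rule sum.cong[OF refl])
      fix i
      have "(\<Sum>k\<in>?A. if k = ?k i then 1 else 0) = (if ?k i \<in> ?A then 1 else (0::nat))"
        by (rule sum.delta) simp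
      then show "(\<Sum>k\<in>?A. if k = ?k i then 1 else 0) = (if i < m j then 1 else (0::nat))"
        unfolding mem .
    qed
    also have "\<dots> = card {i. i < s \<and> i < m j}" by (simp add: sum.If_cases Int_def)
    also have "{i. i < s \<and> i < m j} = {..<m j}" using mj by auto
    finally show ?thesis by simp
  qed
qed

definition lift_coeffs :: "nat \<Rightarrow> nat \<Rightarrow> ((nat \<Rightarrow> nat) \<Rightarrow> 'a::field) \<Rightarrow> (nat \<Rightarrow> nat) \<Rightarrow> 'a" where
  "lift_coeffs d s a e = (if e = segre_monomial d s (multidegree d e) then a (multidegree d e) else 0)"

lemma pullback_lift_coeffs:
  assumes m: "m \<in> multidegrees d s"
  shows "pullback_coeffs d s (lift_coeffs d s a) m = a m"
proof -
  have "pullback_coeffs d s (lift_coeffs d s a) m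
      = (\<Sum>e\<in>{e \<in> monomials (2 ^ d - 1) s. multidegree d e = m}. if e = segre_monomial d s m then a m else 0)"
    unfolding pullback_coeffs_def lift_coeffs_def by (rule sum.cong) auto
  also have "\<dots> = a m"
    using segre_monomial_in_monomials multidegree_segre_monomial[OF m]
    by (simp add: sum.delta' finite_monomials)
  finally show ?thesis .
qed

lemma hom_eval_segre_points:
  assumes "x \<in> segre_points d"
  shows "hom_eval (2 ^ d - 1) s c x = mform_word d s (pullback_coeffs d s c) (segre_inv d x)"
proof -
  have "segre_inv d x \<in> P1_power d" using assms bij_segre_inv by (rule bij_betw_apply[rotated])
  then show ?thesis
    using hom_eval_segre[of d s c "segre_inv d x"] segre_segre_inv[OF assms]
    by (simp add: mform_word_def)
qed

lemma eval_code_segre: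
  "eval_code (2 ^ d - 1) (segre_points d) s
    = reindex_word (segre_inv d) (segre_points d) ` mform_code d s"
proof (intro set_eqI iffI)
  fix w :: "(nat \<Rightarrow> 'a) \<Rightarrow> 'a" assume "w \<in> eval_code (2 ^ d - 1) (segre_points d) s"
  then obtain c where "w = (\<lambda>x. if x \<in> segre_points d then hom_eval (2 ^ d - 1) s c x else 0)"
    unfolding eval_code_def by blast
  then have "w = reindex_word (segre_inv d) (segre_points d) (mform_word d s (pullback_coeffs d s c))"
    using hom_eval_segre_points by (auto simp: reindex_word_def fun_eq_iff)
  then show "w \<in> reindex_word (segre_inv d) (segre_points d) ` mform_code d s"
    by (simp add: mform_code_def)
next
  fix w :: "(nat \<Rightarrow> 'a) \<Rightarrow> 'a"
  assume "w \<in> reindex_word (segre_inv d) (segre_points d) ` mform_code d s"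
  then obtain a where a: "w = reindex_word (segre_inv d) (segre_points d) (mform_word d s a)"
    by (auto simp: mform_code_def)
  have "mform d s (pullback_coeffs d s (lift_coeffs d s a)) t = mform d s a t" for t
    by (rule mform_cong) (rule pullback_lift_coeffs)
  then have lift: "mform_word d s (pullback_coeffs d s (lift_coeffs d s a)) = mform_word d s a"
    unfolding mform_word_def by (simp only:)
  have "w = (\<lambda>x. if x \<in> segre_points d then hom_eval (2 ^ d - 1) s (lift_coeffs d s a) x else 0)"
  proof
    fix x show "w x = (if x \<in> segre_points d then hom_eval (2 ^ d - 1) s (lift_coeffs d s a) x else 0)"
      using hom_eval_segre_points[of x d s "lift_coeffs d s a"] by (simp add: a reindex_word_def lift)
  qed
  then show "w \<in> eval_code (2 ^ d - 1) (segre_points d) s" unfolding eval_code_def by blast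
qed

lemma card_segre_points:
  "card (segre_points d :: (nat \<Rightarrow> 'a::{finite,field}) set) = (card (UNIV :: 'a set) + 1) ^ d"
  using bij_betw_same_card[OF bij_segre_inv] card_P1_power by metis

lemma code_dim_eval_code_segre:
  assumes s: "s \<le> card (UNIV :: 'a::{finite,field} set)"
  shows "code_dim (eval_code (2 ^ d - 1) (segre_points d :: (nat \<Rightarrow> 'a) set) s) = (s + 1) ^ d"
proof -
  let ?E = "mmono_word d s :: _ \<Rightarrow> _ \<Rightarrow> 'a"
  have "?E ` multidegrees d s \<subseteq> words_on (P1_power d)" by (auto simp: mmono_word_def words_on_def)
  then have "code_dim (eval_code (2 ^ d - 1) (segre_points d :: (nat \<Rightarrow> 'a) set) s)
      = card (?E ` multidegrees d s)"
    unfolding eval_code_segre mform_code_span[OF s]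
    by (rule code_dim_reindex_word[OF bij_segre_inv _ mmono_words_independent(2)[OF s]])
  then show ?thesis by (simp add: card_image[OF mmono_words_independent(1)[OF s]] card_multidegrees)
qed

lemma min_dist_eval_code_segre:
  assumes s: "s < card (UNIV :: 'a::{finite,field} set)"
  shows "min_dist (eval_code (2 ^ d - 1) (segre_points d :: (nat \<Rightarrow> 'a) set) s)
    = (card (UNIV :: 'a set) - s + 1) ^ d"
proof -
  have "min_dist (eval_code (2 ^ d - 1) (segre_points d :: (nat \<Rightarrow> 'a) set) s)
      = min_dist (mform_code d s :: (_ \<Rightarrow> 'a) set)"
    unfolding eval_code_segre by (rule min_dist_reindex_word[OF bij_segre_inv mform_code_words_on])
  also have "\<dots> = (card (UNIV :: 'a set) + 1 - s) ^ d" by (rule min_dist_mform_code[OF s])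
  also have "card (UNIV :: 'a set) + 1 - s = card (UNIV :: 'a set) - s + 1" using s by simp
  finally show ?thesis .
qed

lemma eval_code_segre_tensor_power:
  assumes s: "s \<le> card (UNIV :: 'a::{finite,field} set)"
  shows "eval_code (2 ^ d - 1) (segre_points d :: (nat \<Rightarrow> 'a) set) s
    = {(\<lambda>x. if x \<in> segre_points d then w (segre_inv d x) else 0) | w.
         w \<in> tensor_power d (proj_points 1) (eval_code 1 (proj_points 1 :: (nat \<Rightarrow> 'a) set) s)}"
  unfolding tensor_power_P1[OF s] eval_code_segre reindex_word_def by blast

text \<open>The main theorem.\<close>

theorem theorem4p1:
  fixes d s :: nat
  assumes "d \<ge> 2" and "s < card (UNIV :: 'a::{finite,field} set)"
  shows "card (segre_points d :: (nat \<Rightarrow> 'a) set) = (card (UNIV :: 'a set) + 1) ^ d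
     \<and> code_dim (eval_code (2 ^ d - 1) (segre_points d :: (nat \<Rightarrow> 'a) set) s) = (s + 1) ^ d
     \<and> min_dist (eval_code (2 ^ d - 1) (segre_points d :: (nat \<Rightarrow> 'a) set) s) = (card (UNIV :: 'a set) - s + 1) ^ d
     \<and> (\<exists>\<sigma>. bij_betw \<sigma> (segre_points d :: (nat \<Rightarrow> 'a) set) (P1_power d)
          \<and> eval_code (2 ^ d - 1) (segre_points d :: (nat \<Rightarrow> 'a) set) s
            = {(\<lambda>x. if x \<in> segre_points d then w (\<sigma> x) else 0) | w.
                 w \<in> tensor_power d (proj_points 1) (eval_code 1 (proj_points 1 :: (nat \<Rightarrow> 'a) set) s)})"
proof -
  have s: "s \<le> card (UNIV :: 'a set)" using assms(2) by simp
  show ?thesis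
    using card_segre_points code_dim_eval_code_segre[OF s] min_dist_eval_code_segre[OF assms(2)]
      bij_segre_inv eval_code_segre_tensor_power[OF s]
    by blast
qed

end
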